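(* Let $\mathcal V=\mathcal V_1\sqcup\mathcal V_{-1}$ be a finite set, $\mathcal E\subseteq\mathcal V_1\times\mathcal V_{-1}$, and $P:\mathcal V\to(0,\infty)$ with $p_v=P(\{v\})$. Then $\mathsf{OptProb}(\mathcal V_1,\mathcal V_{-1},\mathcal E,P)$ terminates and returns a pair $(q,z)$ in which $q$ is the (unique) minimizer of $$\min_{q\in\mathbb R^{\mathcal V}}\sum_{v\in\mathcal V}-p_v\log q_v\quad\text{s.t.}\quad q\ge\mathbf 0,\ Mq\le\mathbf 1,$$ where $M$ is the matrix associated with the bipartite graph $(\mathcal V_1,\mathcal V_{-1},\mathcal E)$.
   Context: For disjoint finite sets $\mathcal A,\mathcal B$, $\mathcal E\subseteq\mathcal A\times\mathcal B$, and weights $P:\mathcal A\cup\mathcal B\to[0,\infty)$ with $P(S)=\sum_{v\in S}P(\{v\})$: $E$ is the edge incidence matrix ($E_{e,w}=1$ if $w$ is an endpoint of $e$, else $0$) and $M=\begin{pmatrix}E\\ I\end{pmatrix}$ with rows indexed by $\mathcal E\sqcup(\mathcal A\cup\mathcal B)$. Define $r\in\mathbb R^{\mathcal A\cup\mathcal B}$: if $P(\mathcal A),P(\mathcal B)>0$, $r_v=P(\{v\})P(\mathcal A\cup\mathcal B)/P(\mathcal A)$ for $v\in\mathcal A$ and $r_v=P(\{v\})P(\mathcal A\cup\mathcal B)/P(\mathcal B)$ for $v\in\mathcal B$; otherwise $r_v=P(\{v\})$. $\mathsf{LinOpt}(\mathcal A,\mathcal B,\mathcal E,P)$ takes an optimal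 $y\in\{0,1\}^{\mathcal A\cup\mathcal B}$ of $\max r^{\top}y$ s.t. $y\ge\mathbf 0$, $My\le\mathbf 1$, and an optimal $z$ of the dual $\min\mathbf 1^{\top}z$ s.t. $z\ge\mathbf 0$, $M^{\top}z\ge r$, and returns $\mathcal A^+=\{v\in\mathcal A:y_v=1\}$, $\mathcal A^-=\mathcal A\setminus\mathcal A^+$, $\mathcal B^+=\{v\in\mathcal B:y_v=1\}$, $\mathcal B^-=\mathcal B\setminus\mathcal B^+$, and $z^{\mathrm{lin}}=z$. $\mathsf{OptProb}(\mathcal A,\mathcal B,\mathcal E,P)$ is the recursive procedure: compute $(\mathcal A^+,\mathcal A^-,\mathcal B^+,\mathcal B^-,z^{\mathrm{lin}})=\mathsf{LinOpt}(\mathcal A,\mathcal B,\mathcal E,P)$. If $P(\mathcal A^+)P(\mathcal B^+)>P(\mathcal A^-)P(\mathcal B^-)$: let $\mathcal E'=\mathcal E\cap(\mathcal A^+\times\mathcal B^-)$, $\mathcal E''=\mathcal E\cap(\mathcal A^-\times\mathcal B^+)$, $(q',z')=\mathsf{OptProb}(\mathcal A^+,\mathcal B^-,\mathcal E',P)$, $(q'',z'')=\mathsf{OptProb}(\mathcal A^-,\mathcal B^+,\mathcal E'',P)$; set $q_v=q'_v$ for $v\in\mathcal A^+\cup\mathcal B^-$ and $q_v=q''_v$ for $v\in\mathcal A^-\cup\mathcal B^+$; set $z_e=z'_e$ for $e\in\mathcal E'\cup\mathcal A^+\cup\mathcal B^-$, $z_e=z''_e$ for $e\in\mathcal E''\cup\mathcal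 A^-\cup\mathcal B^+$, and $z_e=0$ for other $e\in\mathcal E$. Otherwise: set $q_v=P(\mathcal A)/P(\mathcal A\cup\mathcal B)$ for $v\in\mathcal A$, $q_v=P(\mathcal B)/P(\mathcal A\cup\mathcal B)$ for $v\in\mathcal B$, and $z=z^{\mathrm{lin}}$. Return $(q,z)$. The claim holds for any choice of optimal solutions made by $\mathsf{LinOpt}$. *)

theory Defs
  imports Complex_Main "HOL-Library.Extended_Real"
begin

text \<open>The rows of M are indexed by the disjoint union E + (A \<union> B), rendered
  as the sum type ('a \<times> 'a) + 'a: Inl e for an edge row, Inr v for an identity row.\<close>

type_synonym 'a row = "('a \<times> 'a) + 'a"

definition rows :: "'a set \<Rightarrow> 'a set \<Rightarrow> ('a \<times> 'a) set \<Rightarrow> 'a row set" where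
  "rows A B E = Inl ` E \<union> Inr ` (A \<union> B)"

definition Mmat :: "'a row \<Rightarrow> 'a \<Rightarrow> real" where
  "Mmat r w = (case r of
      Inl e \<Rightarrow> (if w = fst e \<or> w = snd e then 1 else 0)
    | Inr u \<Rightarrow> (if w = u then 1 else 0))"

definition Mvec :: "'a set \<Rightarrow> 'a set \<Rightarrow> ('a \<Rightarrow> real) \<Rightarrow> 'a row \<Rightarrow> real" where
  "Mvec A B y r = (\<Sum>w\<in>A \<union> B. Mmat r w * y w)"

definition MTvec :: "'a set \<Rightarrow> 'a set \<Rightarrow> ('a \<times> 'a) set \<Rightarrow> ('a row \<Rightarrow> real) \<Rightarrow> 'a \<Rightarrow> real" where
  "MTvec A B E z w = (\<Sum>r\<in>rows A B E. Mmat r w * z r)"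

definition feasible :: "'a set \<Rightarrow> 'a set \<Rightarrow> ('a \<times> 'a) set \<Rightarrow> ('a \<Rightarrow> real) \<Rightarrow> bool" where
  "feasible A B E q \<longleftrightarrow> (\<forall>v\<in>A \<union> B. 0 \<le> q v) \<and> (\<forall>r\<in>rows A B E. Mvec A B q r \<le> 1)"

definition rvec :: "'a set \<Rightarrow> 'a set \<Rightarrow> ('a \<Rightarrow> real) \<Rightarrow> 'a \<Rightarrow> real" where
  "rvec A B P v =
     (if sum P A > 0 \<and> sum P B > 0 then
        (if v \<in> A then P v * sum P (A \<union> B) / sum P A else P v * sum P (A \<union> B) / sum P B)
      else P v)"

definition primal_opt :: "'a set \<Rightarrow> 'a set \<Rightarrow> ('a \<times> 'a) set \<Rightarrow> ('a \<Rightarrow> real) \<Rightarrow> ('a \<Rightarrow> real) \<Rightarrow> bool" where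
  "primal_opt A B E P y \<longleftrightarrow> feasible A B E y \<and>
     (\<forall>y'. feasible A B E y' \<longrightarrow>
        (\<Sum>v\<in>A \<union> B. rvec A B P v * y' v) \<le> (\<Sum>v\<in>A \<union> B. rvec A B P v * y v))"

definition dual_feasible :: "'a set \<Rightarrow> 'a set \<Rightarrow> ('a \<times> 'a) set \<Rightarrow> ('a \<Rightarrow> real) \<Rightarrow> ('a row \<Rightarrow> real) \<Rightarrow> bool" where
  "dual_feasible A B E P z \<longleftrightarrow> (\<forall>r\<in>rows A B E. 0 \<le> z r) \<and>
     (\<forall>w\<in>A \<union> B. MTvec A B E z w \<ge> rvec A B P w)"

definition dual_opt :: "'a set \<Rightarrow> 'a set \<Rightarrow> ('a \<times> 'a) set \<Rightarrow> ('a \<Rightarrow> real) \<Rightarrow> ('a row \<Rightarrow> real) \<Rightarrow> bool" where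
  "dual_opt A B E P z \<longleftrightarrow> dual_feasible A B E P z \<and>
     (\<forall>z'. dual_feasible A B E P z' \<longrightarrow> (\<Sum>r\<in>rows A B E. z r) \<le> (\<Sum>r\<in>rows A B E. z' r))"

text \<open>LinOpt as a relation: (Ap, Am, Bp, Bm, z) is a possible output, for some
  choice of an optimal 0/1 primal solution y and an optimal dual solution z.\<close>
definition LinOpt :: "'a set \<Rightarrow> 'a set \<Rightarrow> ('a \<times> 'a) set \<Rightarrow> ('a \<Rightarrow> real) \<Rightarrow>
    'a set \<Rightarrow> 'a set \<Rightarrow> 'a set \<Rightarrow> 'a set \<Rightarrow> ('a row \<Rightarrow> real) \<Rightarrow> bool" where
  "LinOpt A B E P Ap Am Bp Bm z \<longleftrightarrow>
     (\<exists>y. (\<forall>v\<in>A \<union> B. y v \<in> {0, 1}) \<and> primal_opt A B E P y \<and>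
          Ap = {v\<in>A. y v = 1} \<and> Am = A - Ap \<and> Bp = {v\<in>B. y v = 1} \<and> Bm = B - Bp) \<and>
     dual_opt A B E P z"

text \<open>OptProb as a (nondeterministic) relation between inputs and possible outputs.
  Outside their index sets, outputs are set to 0 (irrelevant convention).\<close>
inductive OptProb :: "'a set \<Rightarrow> 'a set \<Rightarrow> ('a \<times> 'a) set \<Rightarrow> ('a \<Rightarrow> real) \<Rightarrow>
    ('a \<Rightarrow> real) \<Rightarrow> ('a row \<Rightarrow> real) \<Rightarrow> bool" where
  split:
  "\<lbrakk> LinOpt A B E P Ap Am Bp Bm zl;
     sum P Ap * sum P Bp > sum P Am * sum P Bm;
     OptProb Ap Bm (E \<inter> (Ap \<times> Bm)) P q' z';
     OptProb Am Bp (E \<inter> (Am \<times> Bp)) P q'' z'' \<rbrakk> \<Longrightarrow>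
   OptProb A B E P
     (\<lambda>v. if v \<in> Ap \<union> Bm then q' v else if v \<in> Am \<union> Bp then q'' v else 0)
     (\<lambda>e. if e \<in> Inl ` (E \<inter> (Ap \<times> Bm)) \<union> Inr ` (Ap \<union> Bm) then z' e
          else if e \<in> Inl ` (E \<inter> (Am \<times> Bp)) \<union> Inr ` (Am \<union> Bp) then z'' e
          else 0)"
| stop:
  "\<lbrakk> LinOpt A B E P Ap Am Bp Bm zl;
     \<not> (sum P Ap * sum P Bp > sum P Am * sum P Bm) \<rbrakk> \<Longrightarrow>
   OptProb A B E P
     (\<lambda>v. if v \<in> A then sum P A / sum P (A \<union> B)
          else if v \<in> B then sum P B / sum P (A \<union> B) else 0)
     zl"

definition OptProb_call :: "('a \<Rightarrow> real) \<Rightarrow>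
    ('a set \<times> 'a set \<times> ('a \<times> 'a) set) \<Rightarrow> ('a set \<times> 'a set \<times> ('a \<times> 'a) set) \<Rightarrow> bool" where
  "OptProb_call P x' x \<longleftrightarrow> (case x of (A, B, E) \<Rightarrow>
     (\<exists>Ap Am Bp Bm zl. LinOpt A B E P Ap Am Bp Bm zl \<and>
        sum P Ap * sum P Bp > sum P Am * sum P Bm \<and>
        (x' = (Ap, Bm, E \<inter> (Ap \<times> Bm)) \<or> x' = (Am, Bp, E \<inter> (Am \<times> Bp)))))"

text \<open>Termination for every choice: no infinite chain of recursive calls starting at x.\<close>
definition OptProb_terminates :: "('a \<Rightarrow> real) \<Rightarrow> 'a set \<Rightarrow> 'a set \<Rightarrow> ('a \<times> 'a) set \<Rightarrow> bool" where
  "OptProb_terminates P A B E \<longleftrightarrow> (A, B, E) \<in> Wellfounded.acc {(x', x). OptProb_call P x' x}"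

text \<open>Objective \<Sum> - p_v log q_v, with value +\<infinity> if some q_v \<le> 0 (p_v > 0).\<close>
definition neg_loglik :: "'a set \<Rightarrow> ('a \<Rightarrow> real) \<Rightarrow> ('a \<Rightarrow> real) \<Rightarrow> ereal" where
  "neg_loglik V P q = (\<Sum>v\<in>V. if q v > 0 then ereal (- P v * ln (q v)) else \<infinity>)"

definition is_unique_minimizer :: "'a set \<Rightarrow> 'a set \<Rightarrow> ('a \<times> 'a) set \<Rightarrow> ('a \<Rightarrow> real) \<Rightarrow> ('a \<Rightarrow> real) \<Rightarrow> bool" where
  "is_unique_minimizer A B E P q \<longleftrightarrow> feasible A B E q \<and>
     (\<forall>q'. feasible A B E q' \<longrightarrow> neg_loglik (A \<union> B) P q \<le> neg_loglik (A \<union> B) P q') \<and>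
     (\<forall>q'. feasible A B E q' \<and> neg_loglik (A \<union> B) P q' \<le> neg_loglik (A \<union> B) P q \<longrightarrow>
          (\<forall>v\<in>A \<union> B. q' v = q v))"

end

theory Submission
  imports Defs "HOL-Analysis.Analysis"
begin

(* Both branches are certified by the tangent inequality  p ln x' <= p ln x + (p / x) (x' - x).
   In the stopping case q is P(A)/P(V) on A and P(B)/P(V) on B, so r_v q_v = p_v, and the
   stopping condition says exactly that the LP value r(A+ \<union> B+) is at most P(V); as r.q' never
   exceeds the LP value on the feasible region, summing the tangent inequality shows that q is
   the unique maximiser of \<Sum> p_v ln q_v.
   In the splitting case the objective separates over A+ \<union> B- and A- \<union> B+, and no edge joins
   A+ and B+. Edges between A- and B- stay feasible because the recursive solutions are at most
   P(A)/P(V) on A- and at most P(B)/P(V) on B-. These bounds come from a Hall-type invariant of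
   the output together with an exchange argument for the maximum-weight independent set
   A+ \<union> B+. The recursion terminates because the splitting condition forces A+ and B+ to be
   nonempty. *)

section \<open>Instances and the feasible region\<close>

definition valid_instance :: "'a set \<Rightarrow> 'a set \<Rightarrow> ('a \<times> 'a) set \<Rightarrow> ('a \<Rightarrow> real) \<Rightarrow> bool" where
  "valid_instance A B E P \<longleftrightarrow>
     finite A \<and> finite B \<and> A \<inter> B = {} \<and> E \<subseteq> A \<times> B \<and> (\<forall>v\<in>A \<union> B. 0 < P v)"

definition indep :: "('a \<times> 'a) set \<Rightarrow> 'a set \<Rightarrow> bool" where
  "indep E U \<longleftrightarrow> (\<forall>(a, b)\<in>E. a \<notin> U \<or> b \<notin> U)"

lemma valid_instanceD:
  assumes "valid_instance A B E P"
  shows "finite A" "finite B" "A \<inter> B = {}" "E \<subseteq> A \<times> B" "\<And>v. v \<in> A \<union> B \<Longrightarrow> 0 < P v"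
  using assms unfolding valid_instance_def by auto

lemma valid_instance_subproblem:
  assumes "valid_instance A B E P" "A' \<subseteq> A" "B' \<subseteq> B"
  shows "valid_instance A' B' (E \<inter> (A' \<times> B')) P"
  using assms unfolding valid_instance_def by (auto intro: finite_subset)

lemma Mvec_edge:
  assumes "finite (A \<union> B)" "a \<in> A \<union> B" "b \<in> A \<union> B" "a \<noteq> b"
  shows "Mvec A B q (Inl (a, b)) = q a + q b"
proof -
  have "Mvec A B q (Inl (a, b)) = (\<Sum>w\<in>A \<union> B. (if w = a then q w else 0) + (if w = b then q w else 0))"
    unfolding Mvec_def Mmat_def using assms(4) by (intro sum.cong) auto
  also have "\<dots> = q a + q b"
    using assms by (simp add: sum.distrib)
  finally show ?thesis .
qed

lemma Mvec_vertex:
  assumes "finite (A \<union> B)" "v \<in> A \<union> B"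
  shows "Mvec A B q (Inr v) = q v"
proof -
  have "Mvec A B q (Inr v) = (\<Sum>w\<in>A \<union> B. if w = v then q w else 0)"
    unfolding Mvec_def Mmat_def by (intro sum.cong) auto
  then show ?thesis
    using assms by simp
qed

lemma feasible_iff:
  assumes "finite A" "finite B" "A \<inter> B = {}" "E \<subseteq> A \<times> B"
  shows "feasible A B E q \<longleftrightarrow>
    (\<forall>v\<in>A \<union> B. 0 \<le> q v \<and> q v \<le> 1) \<and> (\<forall>(a, b)\<in>E. q a + q b \<le> 1)"
proof -
  have edge: "Mvec A B q (Inl (a, b)) = q a + q b" if "(a, b) \<in> E" for a b
    using that assms by (intro Mvec_edge) auto
  have vertex: "Mvec A B q (Inr v) = q v" if "v \<in> A \<union> B" for v
    using that assms by (intro Mvec_vertex) auto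
  have "(\<forall>r\<in>Defs.rows A B E. Mvec A B q r \<le> 1) \<longleftrightarrow>
      (\<forall>e\<in>E. Mvec A B q (Inl e) \<le> 1) \<and> (\<forall>v\<in>A \<union> B. Mvec A B q (Inr v) \<le> 1)"
    unfolding Defs.rows_def by blast
  also have "\<dots> \<longleftrightarrow> (\<forall>(a, b)\<in>E. q a + q b \<le> 1) \<and> (\<forall>v\<in>A \<union> B. q v \<le> 1)"
    using edge vertex by auto
  finally have "(\<forall>r\<in>Defs.rows A B E. Mvec A B q r \<le> 1) \<longleftrightarrow>
      (\<forall>(a, b)\<in>E. q a + q b \<le> 1) \<and> (\<forall>v\<in>A \<union> B. q v \<le> 1)" .
  then show ?thesis
    unfolding feasible_def by auto
qed

lemma feasible_subproblem:
  assumes "valid_instance A B E P" "A' \<subseteq> A" "B' \<subseteq> B" "feasible A B E q"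
  shows "feasible A' B' (E \<inter> (A' \<times> B')) q"
proof -
  note sub = valid_instance_subproblem[OF assms(1-3)]
  show ?thesis
    using assms(2-4)
    unfolding feasible_iff[OF valid_instanceD(1-4)[OF sub]] feasible_iff[OF valid_instanceD(1-4)[OF assms(1)]]
    by auto
qed

lemma feasible_indicator:
  assumes "valid_instance A B E P" "indep E U"
  shows "feasible A B E (indicator U)"
  using assms(2) unfolding feasible_iff[OF valid_instanceD(1-4)[OF assms(1)]] indep_def by (auto simp: indicator_def)

lemma LinOpt_partition:
  assumes "LinOpt A B E P Ap Am Bp Bm zl"
  shows "Ap \<subseteq> A" "Am = A - Ap" "Bp \<subseteq> B" "Bm = B - Bp"
  using assms unfolding LinOpt_def by auto

lemma LinOpt_max_weight:
  assumes "valid_instance A B E P" "LinOpt A B E P Ap Am Bp Bm zl"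
  shows "indep E (Ap \<union> Bp)"
    and "\<And>q. feasible A B E q \<Longrightarrow> (\<Sum>v\<in>A \<union> B. rvec A B P v * q v) \<le> sum (rvec A B P) (Ap \<union> Bp)"
proof -
  obtain y where y01: "\<forall>v\<in>A \<union> B. y v \<in> {0, 1}" and opt: "primal_opt A B E P y"
    and Ap: "Ap = {v\<in>A. y v = 1}" and Bp: "Bp = {v\<in>B. y v = 1}"
    using assms(2) unfolding LinOpt_def by blast
  have "feasible A B E y"
    using opt unfolding primal_opt_def by blast
  then have "\<forall>(a, b)\<in>E. y a + y b \<le> 1"
    unfolding feasible_iff[OF valid_instanceD(1-4)[OF assms(1)]] by blast
  then show "indep E (Ap \<union> Bp)"
    unfolding indep_def Ap Bp by auto
  have "(\<Sum>v\<in>A \<union> B. rvec A B P v * y v) = (\<Sum>v\<in>A \<union> B. rvec A B P v * indicator (Ap \<union> Bp) v)"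
    using y01 unfolding Ap Bp by (intro sum.cong) (auto simp: indicator_def)
  also have "\<dots> = sum (rvec A B P) ((A \<union> B) \<inter> (Ap \<union> Bp))"
    using finite_UnI[OF valid_instanceD(1,2)[OF assms(1)]] by (simp add: Int_def)
  also have "(A \<union> B) \<inter> (Ap \<union> Bp) = Ap \<union> Bp"
    using Ap Bp by auto
  finally show "(\<Sum>v\<in>A \<union> B. rvec A B P v * q v) \<le> sum (rvec A B P) (Ap \<union> Bp)" if "feasible A B E q" for q
    using opt that unfolding primal_opt_def by auto
qed

lemma LinOpt_max_indep:
  assumes "valid_instance A B E P" "LinOpt A B E P Ap Am Bp Bm zl" "U \<subseteq> A \<union> B" "indep E U"
  shows "sum (rvec A B P) U \<le> sum (rvec A B P) (Ap \<union> Bp)"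
proof -
  have "(\<Sum>v\<in>A \<union> B. rvec A B P v * indicator U v) = sum (rvec A B P) ((A \<union> B) \<inter> U)"
    using finite_UnI[OF valid_instanceD(1,2)[OF assms(1)]] by (simp add: Int_def)
  also have "(A \<union> B) \<inter> U = U"
    using assms(3) by blast
  finally show ?thesis
    using LinOpt_max_weight(2)[OF assms(1,2) feasible_indicator[OF assms(1,4)]] by simp
qed

section \<open>The log-likelihood and the tangent inequality\<close>

definition loglik :: "'a set \<Rightarrow> ('a \<Rightarrow> real) \<Rightarrow> ('a \<Rightarrow> real) \<Rightarrow> real" where
  "loglik V P q = (\<Sum>v\<in>V. P v * ln (q v))"

definition unique_loglik_max ::
    "'a set \<Rightarrow> 'a set \<Rightarrow> ('a \<times> 'a) set \<Rightarrow> ('a \<Rightarrow> real) \<Rightarrow> ('a \<Rightarrow> real) \<Rightarrow> bool" where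
  "unique_loglik_max A B E P q \<longleftrightarrow> feasible A B E q \<and> (\<forall>v\<in>A \<union> B. 0 < q v) \<and>
     (\<forall>q'. feasible A B E q' \<and> (\<forall>v\<in>A \<union> B. 0 < q' v) \<longrightarrow>
        loglik (A \<union> B) P q' \<le> loglik (A \<union> B) P q \<and>
        (loglik (A \<union> B) P q' = loglik (A \<union> B) P q \<longrightarrow> (\<forall>v\<in>A \<union> B. q' v = q v)))"

lemma neg_loglik_eq:
  assumes "finite V"
  shows "neg_loglik V P q = (if \<forall>v\<in>V. 0 < q v then ereal (- loglik V P q) else \<infinity>)"
  using assms unfolding neg_loglik_def loglik_def
proof (induction V rule: finite_induct)
  case (insert x F)
  then show ?case
    by (simp add: sum_negf)
qed simp

lemma is_unique_minimizer_iff: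
  assumes "valid_instance A B E P"
  shows "is_unique_minimizer A B E P q \<longleftrightarrow> unique_loglik_max A B E P q"
proof -
  let ?V = "A \<union> B"
  have nl: "neg_loglik ?V P f = (if \<forall>v\<in>?V. 0 < f v then ereal (- loglik ?V P f) else \<infinity>)" for f
    using valid_instanceD(1,2)[OF assms] by (intro neg_loglik_eq) blast
  show ?thesis
  proof
    assume min: "is_unique_minimizer A B E P q"
    have "feasible A B E (\<lambda>_. 1 / 2)"
      unfolding feasible_iff[OF valid_instanceD(1-4)[OF assms]] by auto
    then have "neg_loglik ?V P q \<le> neg_loglik ?V P (\<lambda>_. 1 / 2)"
      using min unfolding is_unique_minimizer_def by blast
    then have pos: "\<forall>v\<in>?V. 0 < q v"
      unfolding nl[of q] nl[of "\<lambda>_. 1 / 2"] by (auto split: if_splits)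
    have "loglik ?V P q' \<le> loglik ?V P q \<and> (loglik ?V P q' = loglik ?V P q \<longrightarrow> (\<forall>v\<in>?V. q' v = q v))"
      if "feasible A B E q'" "\<forall>v\<in>?V. 0 < q' v" for q'
    proof -
      have "neg_loglik ?V P q \<le> neg_loglik ?V P q'"
        using min that(1) unfolding is_unique_minimizer_def by blast
      then have le: "loglik ?V P q' \<le> loglik ?V P q"
        using pos that(2) unfolding nl[of q] nl[of q'] by simp
      have "neg_loglik ?V P q' \<le> neg_loglik ?V P q" if "loglik ?V P q' = loglik ?V P q"
        using that pos \<open>\<forall>v\<in>?V. 0 < q' v\<close> unfolding nl[of q] nl[of q'] by simp
      with le min that(1) show ?thesis
        unfolding is_unique_minimizer_def by blast
    qed
    with min pos show "unique_loglik_max A B E P q"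
      unfolding is_unique_minimizer_def unique_loglik_max_def by blast
  next
    assume max: "unique_loglik_max A B E P q"
    then have pos: "\<forall>v\<in>?V. 0 < q v"
      unfolding unique_loglik_max_def by blast
    have "neg_loglik ?V P q \<le> neg_loglik ?V P q'" if "feasible A B E q'" for q'
      using max that pos unfolding unique_loglik_max_def nl[of q] nl[of q'] by auto
    moreover have "\<forall>v\<in>?V. q' v = q v"
      if "feasible A B E q'" "neg_loglik ?V P q' \<le> neg_loglik ?V P q" for q'
    proof -
      have pos': "\<forall>v\<in>?V. 0 < q' v"
        using that(2) pos unfolding nl[of q] nl[of q'] by (auto split: if_splits)
      then have "loglik ?V P q \<le> loglik ?V P q'"
        using that(2) pos unfolding nl[of q] nl[of q'] by simp
      with max that(1) pos' show ?thesis
        unfolding unique_loglik_max_def by (meson order_antisym)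
    qed
    ultimately show "is_unique_minimizer A B E P q"
      using max unfolding is_unique_minimizer_def unique_loglik_max_def by blast
  qed
qed

lemma loglik_le_of_tangent:
  assumes "finite V" "\<And>v. v \<in> V \<Longrightarrow> 0 < P v" "\<And>v. v \<in> V \<Longrightarrow> 0 < q v"
    and "\<And>v. v \<in> V \<Longrightarrow> r v * q v = P v" "\<And>v. v \<in> V \<Longrightarrow> 0 < q' v"
    and "(\<Sum>v\<in>V. r v * q' v) \<le> sum P V"
  shows "loglik V P q' \<le> loglik V P q"
    and "loglik V P q' = loglik V P q \<Longrightarrow> \<forall>v\<in>V. q' v = q v"
proof -
  define gap where "gap v = P v * (q' v / q v - 1 - ln (q' v / q v))" for v
  have gap_nonneg: "0 \<le> gap v" if "v \<in> V" for v
    using assms(2,3,5)[OF that] ln_le_minus_one[of "q' v / q v"] unfolding gap_def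
    by (intro mult_nonneg_nonneg) auto
  have "P v * ln (q' v) = P v * ln (q v) + r v * q' v - P v - gap v" if "v \<in> V" for v
  proof -
    have pos: "0 < q v" "0 < q' v" and "P v = r v * q v"
      using assms(3-5)[OF that] by auto
    then have ratio: "P v * (q' v / q v) = r v * q' v"
      by simp
    have "gap v = P v * (q' v / q v) - P v - P v * ln (q' v / q v)"
      unfolding gap_def by (simp add: algebra_simps)
    also have "\<dots> = r v * q' v - P v - P v * (ln (q' v) - ln (q v))"
      using pos by (simp only: ratio ln_divide_pos)
    finally show ?thesis
      by (simp add: algebra_simps)
  qed
  then have split: "loglik V P q' = loglik V P q + ((\<Sum>v\<in>V. r v * q' v) - sum P V) - sum gap V"
    unfolding loglik_def by (simp add: sum.distrib sum_subtractf)
  have "0 \<le> sum gap V"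
    using gap_nonneg by (rule sum_nonneg)
  then show le: "loglik V P q' \<le> loglik V P q"
    using split assms(6) by linarith
  assume "loglik V P q' = loglik V P q"
  then have "sum gap V = 0"
    using split assms(6) \<open>0 \<le> sum gap V\<close> by linarith
  then have gap_zero: "gap v = 0" if "v \<in> V" for v
    using that sum_nonneg_eq_0_iff[OF assms(1)] gap_nonneg by blast
  show "\<forall>v\<in>V. q' v = q v"
  proof
    fix v assume v: "v \<in> V"
    have "ln (q' v / q v) = q' v / q v - 1"
      using gap_zero[OF v] assms(2)[OF v] unfolding gap_def by simp
    then have "q' v / q v = 1"
      using assms(3,5)[OF v] by (intro ln_eq_minus_one) auto
    then show "q' v = q v"
      using assms(3)[OF v] by simp
  qed
qed

section \<open>Hall-type bounds\<close>

text \<open>The invariant of the recursion that keeps the edges between \<open>A\<^sup>-\<close> and \<open>B\<^sup>-\<close> feasible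
  when two recursive solutions are glued together.\<close>

definition hall_bounded :: "'a set \<Rightarrow> ('a \<times> 'a) set \<Rightarrow> ('a \<Rightarrow> real) \<Rightarrow> ('a \<Rightarrow> real) \<Rightarrow> bool" where
  "hall_bounded X R P q \<longleftrightarrow>
     (\<forall>\<theta>. 0 \<le> \<theta> \<longrightarrow> \<theta> \<le> 1 \<longrightarrow> (\<forall>S\<subseteq>X. (1 - \<theta>) * sum P S \<le> \<theta> * sum P (R `` S)) \<longrightarrow>
        (\<forall>x\<in>X. q x \<le> \<theta>))"

lemma hall_condition_whole:
  fixes P :: "'a \<Rightarrow> real"
  assumes "\<forall>S\<subseteq>X. (1 - \<theta>) * sum P S \<le> \<theta> * sum P (R `` S)" "0 \<le> \<theta>"
    and "finite Y" "R `` X \<subseteq> Y" "\<And>v. v \<in> Y \<Longrightarrow> 0 \<le> P v"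
  shows "(1 - \<theta>) * sum P X \<le> \<theta> * sum P Y"
proof -
  have "(1 - \<theta>) * sum P X \<le> \<theta> * sum P (R `` X)"
    using assms(1) by blast
  also have "\<dots> \<le> \<theta> * sum P Y"
    using assms(2-5) by (intro mult_left_mono sum_mono2) auto
  finally show ?thesis .
qed

lemma hall_bounded_const:
  assumes "finite Y" "R `` X \<subseteq> Y" "\<And>v. v \<in> X \<union> Y \<Longrightarrow> 0 \<le> P v"
    and "\<And>x. x \<in> X \<Longrightarrow> q x = sum P X / (sum P X + sum P Y)"
  shows "hall_bounded X R P q"
  unfolding hall_bounded_def
proof (intro allI impI ballI)
  fix \<theta> :: real and x
  assume "0 \<le> \<theta>" "\<theta> \<le> 1" and hall: "\<forall>S\<subseteq>X. (1 - \<theta>) * sum P S \<le> \<theta> * sum P (R `` S)"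
    and x: "x \<in> X"
  have "(1 - \<theta>) * sum P X \<le> \<theta> * sum P Y"
    using hall_condition_whole[OF hall \<open>0 \<le> \<theta>\<close> assms(1,2)] assms(3) by blast
  then have "sum P X \<le> \<theta> * (sum P X + sum P Y)"
    by (simp add: algebra_simps)
  moreover have "0 \<le> sum P X + sum P Y"
    using assms(3) by (intro add_nonneg_nonneg sum_nonneg) auto
  ultimately show "q x \<le> \<theta>"
    using assms(4)[OF x] \<open>0 \<le> \<theta>\<close> by (cases "sum P X + sum P Y = 0") (auto simp: divide_le_eq)
qed

lemma hall_bounded_le_ratio:
  fixes a b :: real
  assumes "hall_bounded X R P q" "\<And>S. S \<subseteq> X \<Longrightarrow> sum P S * b \<le> sum P (R `` S) * a"
    and "0 \<le> a" "0 \<le> b" "0 < a + b" "x \<in> X"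
  shows "q x \<le> a / (a + b)"
proof -
  have "(1 - a / (a + b)) * sum P S \<le> a / (a + b) * sum P (R `` S)" if "S \<subseteq> X" for S
  proof -
    have "b * sum P S / (a + b) \<le> a * sum P (R `` S) / (a + b)"
      using assms(2)[OF that] assms(5) by (intro divide_right_mono) (auto simp: mult.commute)
    moreover have "1 - a / (a + b) = b / (a + b)"
      using assms(5) by (simp add: field_simps)
    ultimately show ?thesis
      by simp
  qed
  moreover have "0 \<le> a / (a + b)" "a / (a + b) \<le> 1"
    using assms(3-5) by auto
  ultimately show ?thesis
    using assms(1,6) unfolding hall_bounded_def by blast
qed

lemma hall_condition_of_exchange:
  fixes x y s t \<theta> :: real
  assumes "(1 - \<theta>) * x \<le> \<theta> * y" "\<theta> \<le> 1" "0 < y" "s * y \<le> t * x" "0 \<le> t"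
  shows "(1 - \<theta>) * s \<le> \<theta> * t"
proof -
  have "y * ((1 - \<theta>) * s) = (1 - \<theta>) * (s * y)"
    by (simp add: algebra_simps)
  also have "\<dots> \<le> (1 - \<theta>) * (t * x)"
    using assms(2,4) by (intro mult_left_mono) auto
  also have "\<dots> = t * ((1 - \<theta>) * x)"
    by (simp add: algebra_simps)
  also have "\<dots> \<le> t * (\<theta> * y)"
    using assms(1,5) by (intro mult_left_mono)
  also have "\<dots> = y * (\<theta> * t)"
    by (simp add: algebra_simps)
  finally show ?thesis
    using assms(3) by (simp add: mult_le_cancel_left_pos)
qed

lemma hall_bounded_split:
  assumes "X = X' \<union> X''" "finite Y" "R `` X \<subseteq> Y" "R' `` X' \<subseteq> Y" "R'' `` X'' \<subseteq> Y"
    and "\<And>v. v \<in> Y \<Longrightarrow> 0 \<le> P v" "0 < sum P Y"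
    and restrict: "\<And>S. S \<subseteq> X' \<Longrightarrow> R `` S \<subseteq> R' `` S"
    and exchange: "\<And>S. S \<subseteq> X'' \<Longrightarrow> sum P S * sum P Y \<le> sum P (R'' `` S) * sum P X"
    and hall': "hall_bounded X' R' P q'" and hall'': "hall_bounded X'' R'' P q''"
    and eq': "\<And>x. x \<in> X' \<Longrightarrow> q x = q' x" and eq'': "\<And>x. x \<in> X'' \<Longrightarrow> q x = q'' x"
  shows "hall_bounded X R P q"
  unfolding hall_bounded_def
proof (intro allI impI)
  fix \<theta> :: real
  assume \<theta>: "0 \<le> \<theta>" "\<theta> \<le> 1" and hall: "\<forall>S\<subseteq>X. (1 - \<theta>) * sum P S \<le> \<theta> * sum P (R `` S)"
  have "(1 - \<theta>) * sum P S \<le> \<theta> * sum P (R' `` S)" if S: "S \<subseteq> X'" for S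
  proof -
    have "(1 - \<theta>) * sum P S \<le> \<theta> * sum P (R `` S)"
      using hall S assms(1) by blast
    also have "\<dots> \<le> \<theta> * sum P (R' `` S)"
    proof -
      have "R' `` S \<subseteq> Y"
        using assms(4) S by blast
      then show ?thesis
        using \<theta>(1) restrict[OF S] assms(2,6)
        by (intro mult_left_mono sum_mono2) (auto intro: finite_subset)
    qed
    finally show ?thesis .
  qed
  then have q': "\<forall>x\<in>X'. q' x \<le> \<theta>"
    using hall' \<theta> unfolding hall_bounded_def by blast
  have whole: "(1 - \<theta>) * sum P X \<le> \<theta> * sum P Y"
    by (rule hall_condition_whole[OF hall \<theta>(1) assms(2,3,6)])
  have "(1 - \<theta>) * sum P S \<le> \<theta> * sum P (R'' `` S)" if S: "S \<subseteq> X''" for S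
    using whole \<theta>(2) assms(7) exchange[OF S]
  proof (rule hall_condition_of_exchange)
    show "0 \<le> sum P (R'' `` S)"
      using S assms(5,6) by (intro sum_nonneg) auto
  qed
  then have q'': "\<forall>x\<in>X''. q'' x \<le> \<theta>"
    using hall'' \<theta> unfolding hall_bounded_def by blast
  show "\<forall>x\<in>X. q x \<le> \<theta>"
    using q' q'' assms(1) eq' eq'' by auto
qed

lemma indep_exchange:
  fixes r :: "'a \<Rightarrow> 'b :: ordered_ab_group_add"
  assumes "finite V" "M \<subseteq> V" "S \<subseteq> V" "indep E M" "indep E S" "S \<inter> M = {}"
    and max: "\<And>U. U \<subseteq> V \<Longrightarrow> indep E U \<Longrightarrow> sum r U \<le> sum r M"
  shows "sum r S \<le> sum r (M \<inter> (E `` S \<union> E\<inverse> `` S))"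
proof -
  define T where "T = M \<inter> (E `` S \<union> E\<inverse> `` S)"
  have fin: "finite M" "finite S"
    using assms(1-3) finite_subset by auto
  have "indep E (M - T \<union> S)"
    using assms(4,5) unfolding indep_def T_def by blast
  then have "sum r (M - T \<union> S) \<le> sum r M"
    using assms(2,3) by (intro max) auto
  moreover have "sum r (M - T \<union> S) = sum r (M - T) + sum r S"
    using fin assms(6) by (intro sum.union_disjoint) auto
  moreover have "sum r (M - T) = sum r M - sum r T"
    using fin by (intro sum_diff) (auto simp: T_def)
  ultimately show ?thesis
    unfolding T_def by simp
qed

section \<open>Correctness of the two branches\<close>

lemma rvec_balanced:
  assumes "valid_instance A B E P" "0 < sum P A" "0 < sum P B"
  shows "v \<in> A \<Longrightarrow> rvec A B P v = P v * sum P (A \<union> B) / sum P A"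
    and "v \<in> B \<Longrightarrow> rvec A B P v = P v * sum P (A \<union> B) / sum P B"
  using assms valid_instanceD(3)[OF assms(1)] unfolding rvec_def by auto

lemma sum_rvec_balanced:
  assumes "valid_instance A B E P" "0 < sum P A" "0 < sum P B"
  shows "S \<subseteq> A \<Longrightarrow> sum (rvec A B P) S = sum P S * sum P (A \<union> B) / sum P A"
    and "S \<subseteq> B \<Longrightarrow> sum (rvec A B P) S = sum P S * sum P (A \<union> B) / sum P B"
  using rvec_balanced[OF assms]
  by (auto simp: sum_divide_distrib sum_distrib_right subset_iff intro!: sum.cong)

lemma LinOpt_exchange:
  assumes "valid_instance A B E P" "LinOpt A B E P Ap Am Bp Bm zl" "0 < sum P A" "0 < sum P B"
  shows "S \<subseteq> Am \<Longrightarrow> sum P S * sum P B \<le> sum P ((E \<inter> (Am \<times> Bp)) `` S) * sum P A"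
    and "T \<subseteq> Bm \<Longrightarrow> sum P T * sum P A \<le> sum P ((E \<inter> (Ap \<times> Bm))\<inverse> `` T) * sum P B"
proof -
  note V = valid_instanceD[OF assms(1)] and part = LinOpt_partition[OF assms(2)]
  let ?M = "Ap \<union> Bp" and ?r = "rvec A B P"
  have "finite (A \<union> B)" "?M \<subseteq> A \<union> B"
    using V(1,2) part(1,3) by auto
  note exchange = indep_exchange[OF this _ LinOpt_max_weight(1)[OF assms(1,2)] _ _ LinOpt_max_indep[OF assms(1,2)]]
  have rescale: "x * b \<le> y * a"
    if "x * c / a \<le> y * c / b" "0 < a" "0 < b" "0 < c" for x y a b c :: real
    using that by (simp add: field_simps)
  have PV: "0 < sum P (A \<union> B)"
    using assms(3,4) V(1-3) by (simp add: sum.union_disjoint)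
  show "sum P S * sum P B \<le> sum P ((E \<inter> (Am \<times> Bp)) `` S) * sum P A" if S: "S \<subseteq> Am"
  proof -
    have SA: "S \<subseteq> A" "S \<subseteq> A \<union> B" "S \<inter> ?M = {}"
      using S part V(3) by auto
    have "?M \<inter> (E `` S \<union> E\<inverse> `` S) = (E \<inter> (Am \<times> Bp)) `` S"
      using S SA(1) part V(3,4) by auto
    moreover have "indep E S"
      using SA(1) V(3,4) unfolding indep_def by auto
    ultimately have "sum ?r S \<le> sum ?r ((E \<inter> (Am \<times> Bp)) `` S)"
      using exchange[of S] SA by auto
    moreover have "(E \<inter> (Am \<times> Bp)) `` S \<subseteq> B"
      using part by blast
    ultimately show ?thesis
      using SA sum_rvec_balanced[OF assms(1,3,4)] PV assms(3,4) by (intro rescale) auto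
  qed
  show "sum P T * sum P A \<le> sum P ((E \<inter> (Ap \<times> Bm))\<inverse> `` T) * sum P B" if T: "T \<subseteq> Bm"
  proof -
    have TB: "T \<subseteq> B" "T \<subseteq> A \<union> B" "T \<inter> ?M = {}"
      using T part V(3) by auto
    have "?M \<inter> (E `` T \<union> E\<inverse> `` T) = (E \<inter> (Ap \<times> Bm))\<inverse> `` T"
      using T TB(1) part V(3,4) by auto
    moreover have "indep E T"
      using TB(1) V(3,4) unfolding indep_def by auto
    ultimately have "sum ?r T \<le> sum ?r ((E \<inter> (Ap \<times> Bm))\<inverse> `` T)"
      using exchange[of T] TB by auto
    moreover have "(E \<inter> (Ap \<times> Bm))\<inverse> `` T \<subseteq> A"
      using part by blast
    ultimately show ?thesis
      using TB sum_rvec_balanced[OF assms(1,3,4)] PV assms(3,4) by (intro rescale) auto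
  qed
qed

lemma LinOpt_value_le_total:
  assumes "valid_instance A B E P" "LinOpt A B E P Ap Am Bp Bm zl"
    and "\<not> sum P Am * sum P Bm < sum P Ap * sum P Bp"
  shows "sum (rvec A B P) (Ap \<union> Bp) \<le> sum P (A \<union> B)"
proof (cases "0 < sum P A \<and> 0 < sum P B")
  case True
  note V = valid_instanceD[OF assms(1)] and part = LinOpt_partition[OF assms(2)]
  have fin: "finite Ap" "finite Bp"
    using V(1,2) part finite_subset by auto
  have PA: "sum P A = sum P Ap + sum P Am" and PB: "sum P B = sum P Bp + sum P Bm"
    using V(1,2) part by (metis add.commute sum.subset_diff)+
  have PV: "sum P (A \<union> B) = sum P A + sum P B"
    using V(1-3) by (simp add: sum.union_disjoint)
  have "sum (rvec A B P) (Ap \<union> Bp) = sum (rvec A B P) Ap + sum (rvec A B P) Bp"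
    using fin part V(3) by (intro sum.union_disjoint) auto
  also have "\<dots> = sum P (A \<union> B) * (sum P Ap / sum P A + sum P Bp / sum P B)"
    using part sum_rvec_balanced[OF assms(1) True[THEN conjunct1] True[THEN conjunct2]]
    by (simp add: algebra_simps)
  also have "\<dots> \<le> sum P (A \<union> B) * 1"
  proof (intro mult_left_mono)
    have "sum P Ap * sum P B + sum P Bp * sum P A \<le> sum P A * sum P B"
      using assms(3) unfolding PA PB by (simp add: algebra_simps)
    then show "sum P Ap / sum P A + sum P Bp / sum P B \<le> 1"
      using True by (simp add: field_simps)
    show "0 \<le> sum P (A \<union> B)"
      using True PV by simp
  qed
  finally show ?thesis
    by simp
next
  case False
  then have "rvec A B P = P"
    unfolding rvec_def by auto
  moreover have "sum P (Ap \<union> Bp) \<le> sum P (A \<union> B)"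
    using LinOpt_partition[OF assms(2)] valid_instanceD[OF assms(1)]
    by (intro sum_mono2) (auto intro: less_imp_le)
  ultimately show ?thesis
    by simp
qed

definition OptProb_invariant ::
    "'a set \<Rightarrow> 'a set \<Rightarrow> ('a \<times> 'a) set \<Rightarrow> ('a \<Rightarrow> real) \<Rightarrow> ('a \<Rightarrow> real) \<Rightarrow> bool" where
  "OptProb_invariant A B E P q \<longleftrightarrow>
     unique_loglik_max A B E P q \<and> hall_bounded A E P q \<and> hall_bounded B (E\<inverse>) P q"

lemma unique_loglik_max_of_tangent:
  assumes "valid_instance A B E P" "feasible A B E q"
    and "\<And>v. v \<in> A \<union> B \<Longrightarrow> 0 < q v" "\<And>v. v \<in> A \<union> B \<Longrightarrow> r v * q v = P v"
    and "\<And>q'. feasible A B E q' \<Longrightarrow> (\<Sum>v\<in>A \<union> B. r v * q' v) \<le> sum P (A \<union> B)"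
  shows "unique_loglik_max A B E P q"
proof -
  note V = valid_instanceD[OF assms(1)]
  have "finite (A \<union> B)"
    using V(1,2) by blast
  then have "loglik (A \<union> B) P q' \<le> loglik (A \<union> B) P q \<and>
      (loglik (A \<union> B) P q' = loglik (A \<union> B) P q \<longrightarrow> (\<forall>v\<in>A \<union> B. q' v = q v))"
    if "feasible A B E q'" "\<forall>v\<in>A \<union> B. 0 < q' v" for q'
    using loglik_le_of_tangent[of "A \<union> B" P q r q'] V(5) assms(3-5) that by blast
  then show ?thesis
    unfolding unique_loglik_max_def using assms(2,3) by blast
qed

lemma stop_vector_tangent:
  assumes "valid_instance A B E P"
    and qA: "\<And>v. v \<in> A \<Longrightarrow> q v = sum P A / sum P (A \<union> B)"
    and qB: "\<And>v. v \<in> B \<Longrightarrow> q v = sum P B / sum P (A \<union> B)"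
    and w: "w \<in> A \<union> B"
  shows "0 < q w" "rvec A B P w * q w = P w"
proof -
  note V = valid_instanceD[OF assms(1)]
  have PV: "sum P (A \<union> B) = sum P A + sum P B"
    using V(1-3) by (simp add: sum.union_disjoint)
  have nonneg: "0 \<le> sum P A" "0 \<le> sum P B"
    using V(5) by (auto intro!: sum_nonneg intro: less_imp_le)
  have "0 < q w \<and> rvec A B P w * q w = P w"
  proof (cases "0 < sum P A \<and> 0 < sum P B")
    case True
    then show ?thesis
      using w qA qB rvec_balanced[OF assms(1)] V(3,5) PV by auto
  next
    case unbalanced: False
    then have "rvec A B P w = P w"
      unfolding rvec_def by auto
    moreover have "q w = 1"
    proof (cases "w \<in> A")
      case True
      then have "0 < sum P A"
        using V(1,5) by (intro sum_pos) auto
      then show ?thesis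
        using unbalanced nonneg qA[OF True] PV by auto
    next
      case False
      then have "w \<in> B"
        using w by blast
      then have "0 < sum P B"
        using V(2,5) by (intro sum_pos) auto
      then show ?thesis
        using unbalanced nonneg qB[OF \<open>w \<in> B\<close>] PV by auto
    qed
    ultimately show ?thesis
      using V(5) w by simp
  qed
  then show "0 < q w" "rvec A B P w * q w = P w"
    by blast+
qed

lemma stop_invariant:
  assumes "valid_instance A B E P" "LinOpt A B E P Ap Am Bp Bm zl"
    and "\<not> sum P Am * sum P Bm < sum P Ap * sum P Bp"
    and qA: "\<And>v. v \<in> A \<Longrightarrow> q v = sum P A / sum P (A \<union> B)"
    and qB: "\<And>v. v \<in> B \<Longrightarrow> q v = sum P B / sum P (A \<union> B)"
  shows "OptProb_invariant A B E P q"
proof -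
  note V = valid_instanceD[OF assms(1)]
  have tangent: "0 < q v" "rvec A B P v * q v = P v" if "v \<in> A \<union> B" for v
    using stop_vector_tangent[of A B E P q v] assms(1) qA qB that by blast+
  have PV: "sum P (A \<union> B) = sum P A + sum P B"
    using V(1-3) by (simp add: sum.union_disjoint)
  have feasible: "feasible A B E q"
    unfolding feasible_iff[OF V(1-4)]
  proof (intro conjI ballI)
    fix v assume v: "v \<in> A \<union> B"
    show "0 \<le> q v"
      using tangent(1)[OF v] by simp
    have "0 \<le> sum P A" "0 \<le> sum P B"
      using V(5) by (auto intro!: sum_nonneg intro: less_imp_le)
    then show "q v \<le> 1"
      using v qA qB PV by (auto simp: divide_le_eq_1)
  next
    fix e assume "e \<in> E"
    then obtain a b where "e = (a, b)" "a \<in> A" "b \<in> B"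
      using V(4) by blast
    then show "case e of (a, b) \<Rightarrow> q a + q b \<le> 1"
      using qA qB PV by (simp add: add_divide_distrib[symmetric])
  qed
  have "unique_loglik_max A B E P q"
  proof (rule unique_loglik_max_of_tangent[OF assms(1) feasible tangent])
    show "(\<Sum>v\<in>A \<union> B. rvec A B P v * q' v) \<le> sum P (A \<union> B)" if "feasible A B E q'" for q'
      using LinOpt_max_weight(2)[OF assms(1,2) that] LinOpt_value_le_total[OF assms(1-3)] by linarith
  qed
  moreover have "hall_bounded A E P q"
    using V qA PV by (intro hall_bounded_const[where Y = B]) (auto intro: less_imp_le)
  moreover have "hall_bounded B (E\<inverse>) P q"
    using V qB PV by (intro hall_bounded_const[where Y = A]) (auto intro: less_imp_le simp: add.commute)
  ultimately show ?thesis
    unfolding OptProb_invariant_def by blast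
qed

lemma unique_loglik_max_glue:
  assumes "valid_instance A B E P"
    and "A = A' \<union> A''" "B = B' \<union> B''" "A' \<inter> A'' = {}" "B' \<inter> B'' = {}"
    and max1: "unique_loglik_max A' B' (E \<inter> (A' \<times> B')) P q1"
    and max2: "unique_loglik_max A'' B'' (E \<inter> (A'' \<times> B'')) P q2"
    and q1: "\<And>v. v \<in> A' \<union> B' \<Longrightarrow> q v = q1 v" and q2: "\<And>v. v \<in> A'' \<union> B'' \<Longrightarrow> q v = q2 v"
    and "feasible A B E q"
  shows "unique_loglik_max A B E P q"
proof -
  note V = valid_instanceD[OF assms(1)]
  let ?V1 = "A' \<union> B'" and ?V2 = "A'' \<union> B''"
  have parts: "A \<union> B = ?V1 \<union> ?V2" "?V1 \<inter> ?V2 = {}" "finite ?V1" "finite ?V2"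
    using assms(2-5) V(1-3) by auto
  have split: "loglik (A \<union> B) P f = loglik ?V1 P f + loglik ?V2 P f" for f
    unfolding loglik_def parts(1) using parts(3,4,2) by (rule sum.union_disjoint)
  have "loglik ?V1 P q = loglik ?V1 P q1" "loglik ?V2 P q = loglik ?V2 P q2"
    unfolding loglik_def using q1 q2 by (auto intro: sum.cong)
  then have loglik_q: "loglik (A \<union> B) P q = loglik ?V1 P q1 + loglik ?V2 P q2"
    using split by simp
  have pos1: "\<forall>v\<in>?V1. 0 < q1 v"
    and opt1: "\<And>q'. feasible A' B' (E \<inter> (A' \<times> B')) q' \<Longrightarrow> \<forall>v\<in>?V1. 0 < q' v \<Longrightarrow>
      loglik ?V1 P q' \<le> loglik ?V1 P q1 \<and>
      (loglik ?V1 P q' = loglik ?V1 P q1 \<longrightarrow> (\<forall>v\<in>?V1. q' v = q1 v))"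
    using max1 unfolding unique_loglik_max_def by blast+
  have pos2: "\<forall>v\<in>?V2. 0 < q2 v"
    and opt2: "\<And>q'. feasible A'' B'' (E \<inter> (A'' \<times> B'')) q' \<Longrightarrow> \<forall>v\<in>?V2. 0 < q' v \<Longrightarrow>
      loglik ?V2 P q' \<le> loglik ?V2 P q2 \<and>
      (loglik ?V2 P q' = loglik ?V2 P q2 \<longrightarrow> (\<forall>v\<in>?V2. q' v = q2 v))"
    using max2 unfolding unique_loglik_max_def by blast+
  have "\<forall>v\<in>A \<union> B. 0 < q v"
    using pos1 pos2 q1 q2 parts(1) by auto
  moreover have "loglik (A \<union> B) P q' \<le> loglik (A \<union> B) P q \<and>
      (loglik (A \<union> B) P q' = loglik (A \<union> B) P q \<longrightarrow> (\<forall>v\<in>A \<union> B. q' v = q v))"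
    if q': "feasible A B E q'" "\<forall>v\<in>A \<union> B. 0 < q' v" for q'
  proof -
    have "feasible A' B' (E \<inter> (A' \<times> B')) q'" "feasible A'' B'' (E \<inter> (A'' \<times> B'')) q'"
      using assms(2,3) by (auto intro!: feasible_subproblem[OF assms(1) _ _ q'(1)])
    moreover have "\<forall>v\<in>?V1. 0 < q' v" "\<forall>v\<in>?V2. 0 < q' v"
      using q'(2) parts(1) by auto
    ultimately have le1: "loglik ?V1 P q' \<le> loglik ?V1 P q1 \<and>
          (loglik ?V1 P q' = loglik ?V1 P q1 \<longrightarrow> (\<forall>v\<in>?V1. q' v = q1 v))"
      and le2: "loglik ?V2 P q' \<le> loglik ?V2 P q2 \<and>
          (loglik ?V2 P q' = loglik ?V2 P q2 \<longrightarrow> (\<forall>v\<in>?V2. q' v = q2 v))"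
      using opt1 opt2 by blast+
    have "loglik (A \<union> B) P q' \<le> loglik (A \<union> B) P q"
      using le1 le2 loglik_q split[of q'] by linarith
    moreover have "\<forall>v\<in>A \<union> B. q' v = q v" if "loglik (A \<union> B) P q' = loglik (A \<union> B) P q"
    proof -
      have "loglik ?V1 P q' = loglik ?V1 P q1" "loglik ?V2 P q' = loglik ?V2 P q2"
        using that le1 le2 loglik_q split[of q'] by linarith+
      then have "\<forall>v\<in>?V1. q' v = q1 v" "\<forall>v\<in>?V2. q' v = q2 v"
        using le1 le2 by blast+
      then show ?thesis
        using parts(1) q1 q2 by (metis UnE)
    qed
    ultimately show ?thesis
      by blast
  qed
  ultimately show ?thesis
    using assms(10) unfolding unique_loglik_max_def by blast
qed

lemma split_nonempty:
  assumes "valid_instance A B E P" "LinOpt A B E P Ap Am Bp Bm zl"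
    and "sum P Am * sum P Bm < sum P Ap * sum P Bp"
  shows "Ap \<noteq> {}" "Bp \<noteq> {}"
proof -
  have "0 \<le> sum P Am * sum P Bm"
    using LinOpt_partition[OF assms(2)] valid_instanceD(5)[OF assms(1)]
    by (intro mult_nonneg_nonneg sum_nonneg) (auto intro: less_imp_le)
  then have "sum P Ap * sum P Bp \<noteq> 0"
    using assms(3) by linarith
  then show "Ap \<noteq> {}" "Bp \<noteq> {}"
    by auto
qed

lemma LinOpt_edge_cases:
  assumes "valid_instance A B E P" "LinOpt A B E P Ap Am Bp Bm zl" "(a, b) \<in> E"
  shows "(a, b) \<in> E \<inter> (Ap \<times> Bm) \<or> (a, b) \<in> E \<inter> (Am \<times> Bp) \<or> a \<in> Am \<and> b \<in> Bm"
  using LinOpt_max_weight(1)[OF assms(1,2)] LinOpt_partition[OF assms(2)] valid_instanceD(4)[OF assms(1)]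
    assms(3) unfolding indep_def by blast

lemma split_feasible:
  assumes "valid_instance A B E P" "LinOpt A B E P Ap Am Bp Bm zl"
    and "feasible Ap Bm (E \<inter> (Ap \<times> Bm)) q1" "feasible Am Bp (E \<inter> (Am \<times> Bp)) q2"
    and q1: "\<And>v. v \<in> Ap \<union> Bm \<Longrightarrow> q v = q1 v" and q2: "\<And>v. v \<in> Am \<union> Bp \<Longrightarrow> q v = q2 v"
    and cross_A: "\<And>a. a \<in> Am \<Longrightarrow> q a \<le> sum P A / (sum P A + sum P B)"
    and cross_B: "\<And>b. b \<in> Bm \<Longrightarrow> q b \<le> sum P B / (sum P A + sum P B)"
  shows "feasible A B E q"
proof -
  note V = valid_instanceD[OF assms(1)] and part = LinOpt_partition[OF assms(2)]
  have V1: "valid_instance Ap Bm (E \<inter> (Ap \<times> Bm)) P" and V2: "valid_instance Am Bp (E \<inter> (Am \<times> Bp)) P"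
    using part by (auto intro!: valid_instance_subproblem[OF assms(1)])
  have box1: "\<forall>v\<in>Ap \<union> Bm. 0 \<le> q1 v \<and> q1 v \<le> 1" and edges1: "\<forall>(a, b)\<in>E \<inter> (Ap \<times> Bm). q1 a + q1 b \<le> 1"
    using assms(3) unfolding feasible_iff[OF valid_instanceD(1-4)[OF V1]] by blast+
  have box2: "\<forall>v\<in>Am \<union> Bp. 0 \<le> q2 v \<and> q2 v \<le> 1" and edges2: "\<forall>(a, b)\<in>E \<inter> (Am \<times> Bp). q2 a + q2 b \<le> 1"
    using assms(4) unfolding feasible_iff[OF valid_instanceD(1-4)[OF V2]] by blast+
  show ?thesis
    unfolding feasible_iff[OF V(1-4)]
  proof (intro conjI ballI)
    fix v assume "v \<in> A \<union> B"
    then consider "v \<in> Ap \<union> Bm" | "v \<in> Am \<union> Bp"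
      using part by blast
    then have "0 \<le> q v \<and> q v \<le> 1"
      by cases (use box1 box2 q1 q2 in auto)
    then show "0 \<le> q v" "q v \<le> 1"
      by auto
  next
    fix e assume e: "e \<in> E"
    then obtain a b where ab: "e = (a, b)" "(a, b) \<in> E" "a \<in> A"
      using V(4) by blast
    have "q a + q b \<le> 1"
      using LinOpt_edge_cases[OF assms(1,2) ab(2)]
    proof (elim disjE conjE)
      assume "(a, b) \<in> E \<inter> (Ap \<times> Bm)"
      then show ?thesis
        using edges1 q1 by fastforce
    next
      assume "(a, b) \<in> E \<inter> (Am \<times> Bp)"
      then show ?thesis
        using edges2 q2 by fastforce
    next
      assume "a \<in> Am" "b \<in> Bm"
      then have "q a + q b \<le> sum P A / (sum P A + sum P B) + sum P B / (sum P A + sum P B)"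
        by (intro add_mono cross_A cross_B)
      also have "\<dots> = 1"
      proof -
        have "0 < sum P A" "0 \<le> sum P B"
          using ab(3) V(1,2,5) by (auto intro: sum_pos sum_nonneg less_imp_le)
        then show ?thesis
          by (simp add: add_divide_distrib[symmetric])
      qed
      finally show ?thesis .
    qed
    then show "case e of (a, b) \<Rightarrow> q a + q b \<le> 1"
      using ab by simp
  qed
qed

lemma split_invariant:
  assumes "valid_instance A B E P" "LinOpt A B E P Ap Am Bp Bm zl"
    and "sum P Am * sum P Bm < sum P Ap * sum P Bp"
    and inv1: "OptProb_invariant Ap Bm (E \<inter> (Ap \<times> Bm)) P q1"
    and inv2: "OptProb_invariant Am Bp (E \<inter> (Am \<times> Bp)) P q2"
    and q1: "\<And>v. v \<in> Ap \<union> Bm \<Longrightarrow> q v = q1 v" and q2: "\<And>v. v \<in> Am \<union> Bp \<Longrightarrow> q v = q2 v"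
  shows "OptProb_invariant A B E P q"
proof -
  note V = valid_instanceD[OF assms(1)] and part = LinOpt_partition[OF assms(2)]
  have indep: "indep E (Ap \<union> Bp)"
    by (rule LinOpt_max_weight(1)[OF assms(1,2)])
  have PA: "0 < sum P A" and PB: "0 < sum P B"
    using split_nonempty[OF assms(1-3)] part V(1,2,5) by (auto intro!: sum_pos)
  note exchange = LinOpt_exchange[OF assms(1,2) PA PB]
  have "q a \<le> sum P A / (sum P A + sum P B)" if "a \<in> Am" for a
    using hall_bounded_le_ratio[where X = Am, OF _ exchange(1)] inv2 q2 that PA PB
    unfolding OptProb_invariant_def by (simp add: less_imp_le)
  moreover have "q b \<le> sum P B / (sum P A + sum P B)" if "b \<in> Bm" for b
    using hall_bounded_le_ratio[where X = Bm, OF _ exchange(2)] inv1 q1 that PA PB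
    unfolding OptProb_invariant_def by (simp add: less_imp_le add.commute)
  ultimately have feasible: "feasible A B E q"
    using inv1 inv2 unfolding OptProb_invariant_def unique_loglik_max_def
    by (intro split_feasible[OF assms(1,2) _ _ q1 q2]) blast+
  have "unique_loglik_max A B E P q"
    using inv1 inv2 part q1 q2 feasible unfolding OptProb_invariant_def
    by (intro unique_loglik_max_glue[where A' = Ap and B' = Bm and A'' = Am and B'' = Bp, OF assms(1)]) auto
  moreover have "hall_bounded A E P q"
  proof (rule hall_bounded_split[where X' = Ap and X'' = Am and Y = B and R' = "E \<inter> (Ap \<times> Bm)"
      and R'' = "E \<inter> (Am \<times> Bp)" and q' = q1 and q'' = q2])
    show "\<And>S. S \<subseteq> Ap \<Longrightarrow> E `` S \<subseteq> (E \<inter> (Ap \<times> Bm)) `` S"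
      using indep V(4) part unfolding indep_def by blast
  qed (use V part exchange(1) inv1 inv2 q1 q2 PB in \<open>auto simp: OptProb_invariant_def intro: less_imp_le\<close>)
  moreover have "hall_bounded B (E\<inverse>) P q"
  proof (rule hall_bounded_split[where X' = Bp and X'' = Bm and Y = A and R' = "(E \<inter> (Am \<times> Bp))\<inverse>"
      and R'' = "(E \<inter> (Ap \<times> Bm))\<inverse>" and q' = q2 and q'' = q1])
    show "\<And>S. S \<subseteq> Bp \<Longrightarrow> E\<inverse> `` S \<subseteq> (E \<inter> (Am \<times> Bp))\<inverse> `` S"
      using indep V(4) part unfolding indep_def by blast
  qed (use V part exchange(2) inv1 inv2 q1 q2 PA in \<open>auto simp: OptProb_invariant_def intro: less_imp_le\<close>)
  ultimately show ?thesis
    unfolding OptProb_invariant_def by blast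
qed

section \<open>Existence of optimal LP solutions\<close>

lemma step_has_integral:
  fixes k lo hi :: real
  assumes "0 \<le> lo" "lo \<le> hi" "hi \<le> 1"
  shows "((\<lambda>t. if t \<in> {lo..hi} then k else 0) has_integral k * (hi - lo)) {0..1}"
proof -
  have "((\<lambda>t. k) has_integral k * (hi - lo)) {lo..hi}"
    using has_integral_const_real[of k lo hi] assms(2) by (simp add: mult.commute)
  then show ?thesis
    using assms by (subst has_integral_restrict) auto
qed

lemma threshold_has_integral:
  fixes k c :: real
  assumes "0 \<le> c" "c \<le> 1"
  shows "((\<lambda>t. k * of_bool (t < c)) has_integral k * c) {0..1}"
    and "((\<lambda>t. k * of_bool (1 - c \<le> t)) has_integral k * c) {0..1}"
proof -
  show "((\<lambda>t. k * of_bool (t < c)) has_integral k * c) {0..1}"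
    using step_has_integral[of 0 c k] assms
    by (subst has_integral_spike_finite_eq[of "{c}", where g = "\<lambda>t. if t \<in> {0..c} then k else 0"]) auto
  show "((\<lambda>t. k * of_bool (1 - c \<le> t)) has_integral k * c) {0..1}"
    using step_has_integral[of "1 - c" 1 k] assms
    by (subst has_integral_spike_finite_eq[of "{}", where g = "\<lambda>t. if t \<in> {1 - c..1} then k else 0"]) auto
qed

text \<open>Threshold rounding: for every \<open>t \<in> [0, 1]\<close> the set
  \<open>{a \<in> A. t < y a} \<union> {b \<in> B. 1 - y b \<le> t}\<close> is independent, and averaging its weight
  over \<open>t\<close> gives \<open>\<Sum> r v * y v\<close>.\<close>

lemma feasible_weight_le_indep_bound:
  assumes "finite A" "finite B" "A \<inter> B = {}" "E \<subseteq> A \<times> B" "feasible A B E y"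
    and bound: "\<And>U. U \<subseteq> A \<union> B \<Longrightarrow> indep E U \<Longrightarrow> sum r U \<le> M"
  shows "(\<Sum>v\<in>A \<union> B. r v * y v) \<le> M"
proof -
  have y: "\<forall>v\<in>A \<union> B. 0 \<le> y v \<and> y v \<le> 1" "\<forall>(a, b)\<in>E. y a + y b \<le> 1"
    using assms(5) unfolding feasible_iff[OF assms(1-4)] by auto
  define U where "U t = {a\<in>A. t < y a} \<union> {b\<in>B. 1 - y b \<le> t}" for t
  have sum_U: "sum r (U t) = (\<Sum>a\<in>A. r a * of_bool (t < y a)) + (\<Sum>b\<in>B. r b * of_bool (1 - y b \<le> t))"
    for t
  proof -
    have "sum r (U t) = sum r {a\<in>A. t < y a} + sum r {b\<in>B. 1 - y b \<le> t}"
      unfolding U_def using assms(1-3) by (intro sum.union_disjoint) auto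
    then show ?thesis
      using assms(1,2) by (simp add: Int_def)
  qed
  have "((\<lambda>t. \<Sum>a\<in>A. r a * of_bool (t < y a)) has_integral (\<Sum>a\<in>A. r a * y a)) {0..1}"
    using y(1) by (intro has_integral_sum[OF assms(1)] threshold_has_integral) auto
  moreover have "((\<lambda>t. \<Sum>b\<in>B. r b * of_bool (1 - y b \<le> t)) has_integral (\<Sum>b\<in>B. r b * y b)) {0..1}"
    using y(1) by (intro has_integral_sum[OF assms(2)] threshold_has_integral) auto
  ultimately have "((\<lambda>t. sum r (U t)) has_integral (\<Sum>v\<in>A \<union> B. r v * y v)) {0..1}"
    unfolding sum_U sum.union_disjoint[OF assms(1-3)] by (rule has_integral_add)
  moreover have "sum r (U t) \<le> M" for t
  proof (rule bound)
    show "U t \<subseteq> A \<union> B"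
      unfolding U_def by auto
    show "indep E (U t)"
      using y(2) assms(3,4) unfolding indep_def U_def by fastforce
  qed
  ultimately show ?thesis
    using has_integral_const_real[of M 0 1] by (auto intro: has_integral_le)
qed

lemma primal_opt_indicator_exists:
  assumes "valid_instance A B E P"
  shows "\<exists>U. primal_opt A B E P (indicator U)"
proof -
  note V = valid_instanceD[OF assms]
  define F where "F = {U. U \<subseteq> A \<union> B \<and> indep E U}"
  let ?w = "sum (rvec A B P)"
  have "F \<subseteq> Pow (A \<union> B)"
    unfolding F_def by blast
  then have "finite F"
    using V(1,2) by (simp add: finite_subset)
  moreover have "{} \<in> F"
    unfolding F_def indep_def by blast
  ultimately have "Max (?w ` F) \<in> ?w ` F"
    by (intro Max_in) auto
  then obtain U where U: "U \<in> F" "?w U = Max (?w ` F)"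
    by (metis imageE)
  have max: "?w U' \<le> ?w U" if "U' \<subseteq> A \<union> B" "indep E U'" for U'
    unfolding U(2) using that \<open>finite F\<close> unfolding F_def by (intro Max_ge) auto
  have "U \<subseteq> A \<union> B" "indep E U"
    using U(1) unfolding F_def by blast+
  have "(\<Sum>v\<in>A \<union> B. rvec A B P v * indicator U v) = ?w ((A \<union> B) \<inter> U)"
    using V(1,2) by (simp add: Int_def)
  also have "(A \<union> B) \<inter> U = U"
    using \<open>U \<subseteq> A \<union> B\<close> by blast
  finally have "(\<Sum>v\<in>A \<union> B. rvec A B P v * indicator U v) = ?w U" .
  moreover have "(\<Sum>v\<in>A \<union> B. rvec A B P v * y v) \<le> ?w U" if "feasible A B E y" for y
    using feasible_weight_le_indep_bound[OF V(1-4) that max] .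
  ultimately have "primal_opt A B E P (indicator U)"
    using feasible_indicator[OF assms \<open>indep E U\<close>] unfolding primal_opt_def by simp
  then show ?thesis
    by blast
qed

lemma compact_box:
  fixes S :: "'b \<Rightarrow> real set"
  assumes "\<And>i. compact (S i)"
  shows "compact {z. \<forall>i. z i \<in> S i}"
proof -
  have "compactin (product_topology (\<lambda>i. euclidean) UNIV) (PiE UNIV S)"
    using assms by (subst compactin_PiE) auto
  moreover have "PiE UNIV S = {z. \<forall>i. z i \<in> S i}"
    by (auto simp: PiE_UNIV_domain Pi_def)
  ultimately show ?thesis
    using euclidean_product_topology compactin_euclidean_iff by metis
qed

lemma rvec_nonneg:
  assumes "valid_instance A B E P" "v \<in> A \<union> B"
  shows "0 \<le> rvec A B P v"
proof -
  have "0 \<le> P v"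
    using valid_instanceD(5)[OF assms] by (simp add: less_imp_le)
  moreover have "0 \<le> sum P (A \<union> B)"
    using valid_instanceD(5)[OF assms(1)] by (intro sum_nonneg) (auto intro: less_imp_le)
  ultimately show ?thesis
    unfolding rvec_def by (simp add: zero_le_divide_iff)
qed

lemma dual_feasible_exists:
  assumes "valid_instance A B E P"
  shows "\<exists>z. dual_feasible A B E P z"
proof -
  note V = valid_instanceD[OF assms]
  define R where "R = Defs.rows A B E"
  define z :: "'a row \<Rightarrow> real" where "z i = (case i of Inr v \<Rightarrow> rvec A B P v | Inl e \<Rightarrow> 0)" for i
  have fin: "finite R"
    using V(1,2,4) finite_subset unfolding R_def Defs.rows_def by blast
  have nonneg: "0 \<le> z i" if "i \<in> R" for i
    using that rvec_nonneg[OF assms] unfolding z_def R_def Defs.rows_def by auto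
  have "rvec A B P w \<le> MTvec A B E z w" if "w \<in> A \<union> B" for w
  proof -
    have "Inr w \<in> R"
      using that unfolding R_def Defs.rows_def by blast
    moreover have "0 \<le> Mmat i w * z i" if "i \<in> R" for i
      using nonneg[OF that] unfolding Mmat_def by (auto split: sum.splits)
    ultimately have "Mmat (Inr w) w * z (Inr w) \<le> MTvec A B E z w"
      unfolding MTvec_def R_def[symmetric] using fin by (intro member_le_sum) auto
    then show ?thesis
      unfolding z_def Mmat_def by simp
  qed
  then show ?thesis
    using nonneg unfolding dual_feasible_def R_def by blast
qed

lemma dual_feasible_truncate:
  assumes "dual_feasible A B E P z"
  shows "dual_feasible A B E P (\<lambda>i. if i \<in> Defs.rows A B E then z i else 0)"
  using assms unfolding dual_feasible_def MTvec_def by (auto cong: sum.cong)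

text \<open>Compactness: feasible duals supported on the rows with value at most that of a fixed feasible
  dual form a compact set, on which the objective attains its minimum.\<close>

lemma dual_opt_exists:
  assumes "valid_instance A B E P"
  shows "\<exists>z. dual_opt A B E P z"
proof -
  note V = valid_instanceD[OF assms]
  define R where "R = Defs.rows A B E"
  define trunc where "trunc z i = (if i \<in> R then z i else 0)" for z :: "'a row \<Rightarrow> real" and i
  have fin: "finite R"
    using V(1,2,4) finite_subset unfolding R_def Defs.rows_def by blast
  obtain z0 where z0: "dual_feasible A B E P z0"
    using dual_feasible_exists[OF assms] by blast
  define C where "C = sum z0 R"
  define K where "K = {z. \<forall>i. z i \<in> (if i \<in> R then {0..C} else {0})} \<inter>
    (\<Inter>w\<in>A \<union> B. {z. rvec A B P w \<le> MTvec A B E z w})"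
  have sum_trunc: "sum (trunc z) R = sum z R" for z
    unfolding trunc_def by simp
  have trunc_in_K: "trunc z \<in> K" if "dual_feasible A B E P z" "sum z R \<le> C" for z
  proof -
    have "z i \<le> C" if "i \<in> R" for i
      using member_le_sum[OF that, of z] fin \<open>dual_feasible A B E P z\<close> \<open>sum z R \<le> C\<close>
      unfolding dual_feasible_def R_def by fastforce
    then show ?thesis
      using dual_feasible_truncate[OF that(1)]
      unfolding K_def trunc_def R_def dual_feasible_def by auto
  qed
  have "compact K"
    unfolding K_def MTvec_def
    by (intro compact_Int_closed compact_box closed_INT ballI closed_Collect_le continuous_intros
        continuous_on_product_coordinates) auto
  moreover have "trunc z0 \<in> K"
    using trunc_in_K[OF z0] unfolding C_def by simp
  moreover have "continuous_on K (\<lambda>z. sum z R)"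
    by (rule continuous_on_subset[OF _ subset_UNIV])
      (intro continuous_intros continuous_on_product_coordinates)
  ultimately obtain zmin where zmin: "zmin \<in> K" "\<And>z. z \<in> K \<Longrightarrow> sum zmin R \<le> sum z R"
    using continuous_attains_inf[of K "\<lambda>z. sum z R"] by blast
  have "dual_feasible A B E P zmin"
  proof -
    have "\<forall>i. zmin i \<in> (if i \<in> R then {0..C} else {0})"
      using zmin(1) unfolding K_def by blast
    then have "0 \<le> zmin i" if "i \<in> R" for i
      using that by (metis atLeastAtMost_iff)
    then show ?thesis
      using zmin(1) unfolding K_def dual_feasible_def R_def by blast
  qed
  moreover have "sum zmin R \<le> sum z R" if "dual_feasible A B E P z" for z
  proof (cases "sum z R \<le> C")
    case True
    then show ?thesis
      using zmin(2)[OF trunc_in_K[OF that True]] sum_trunc by simp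
  next
    case False
    then show ?thesis
      using zmin(2)[OF \<open>trunc z0 \<in> K\<close>] sum_trunc unfolding C_def by simp
  qed
  ultimately show ?thesis
    unfolding dual_opt_def R_def by blast
qed

lemma LinOpt_exists:
  assumes "valid_instance A B E P"
  obtains Ap Am Bp Bm zl where "LinOpt A B E P Ap Am Bp Bm zl"
proof -
  obtain U where "primal_opt A B E P (indicator U)"
    using primal_opt_indicator_exists[OF assms] by blast
  moreover obtain z where "dual_opt A B E P z"
    using dual_opt_exists[OF assms] by blast
  ultimately have "LinOpt A B E P (A \<inter> U) (A - U) (B \<inter> U) (B - U) z"
    unfolding LinOpt_def by (intro conjI exI[where x = "indicator U"]) (auto simp: indicator_def)
  then show thesis
    by (rule that)
qed

section \<open>The recursion\<close>

lemma split_subproblems: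
  assumes "valid_instance A B E P" "LinOpt A B E P Ap Am Bp Bm zl"
    and "sum P Am * sum P Bm < sum P Ap * sum P Bp"
  shows "valid_instance Ap Bm (E \<inter> (Ap \<times> Bm)) P" "card Ap + card Bm < card A + card B"
    and "valid_instance Am Bp (E \<inter> (Am \<times> Bp)) P" "card Am + card Bp < card A + card B"
proof -
  note V = valid_instanceD[OF assms(1)] and part = LinOpt_partition[OF assms(2)]
    and nonempty = split_nonempty[OF assms]
  show "valid_instance Ap Bm (E \<inter> (Ap \<times> Bm)) P" "valid_instance Am Bp (E \<inter> (Am \<times> Bp)) P"
    using part by (auto intro!: valid_instance_subproblem[OF assms(1)])
  have "card Ap \<le> card A" "card Bp \<le> card B"
    using part V(1,2) by (auto intro: card_mono)
  moreover have "card Am < card A" "card Bm < card B"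
    using part nonempty V(1,2) by (auto intro!: psubset_card_mono)
  ultimately show "card Ap + card Bm < card A + card B" "card Am + card Bp < card A + card B"
    by linarith+
qed

lemma OptProb_invariant_holds:
  assumes "OptProb A B E P q z" "valid_instance A B E P"
  shows "OptProb_invariant A B E P q"
  using assms
proof (induction rule: OptProb.induct)
  case (split A B E P Ap Am Bp Bm zl q' z' q'' z'')
  note sub = split_subproblems[OF split.prems split.hyps(1,2)]
  have "Ap \<inter> Am = {}" "Bp \<inter> Bm = {}" "A \<inter> B = {}"
    using LinOpt_partition[OF split.hyps(1)] valid_instanceD(3)[OF split.prems] by auto
  then show ?case
    using LinOpt_partition[OF split.hyps(1)]
    by (intro split_invariant[OF split.prems split.hyps(1,2) split.IH(1)[OF sub(1)] split.IH(2)[OF sub(3)]])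
      auto
next
  case (stop A B E P Ap Am Bp Bm zl)
  then show ?case
    using valid_instanceD(3)[OF stop.prems] by (intro stop_invariant) auto
qed

lemma OptProb_terminates_if_valid:
  assumes "valid_instance A B E P"
  shows "OptProb_terminates P A B E"
  unfolding OptProb_terminates_def
  using assms
proof (induction "card A + card B" arbitrary: A B E rule: less_induct)
  case less
  show ?case
  proof (rule accI)
    fix x' assume "(x', (A, B, E)) \<in> {(x', x). OptProb_call P x' x}"
    then obtain Ap Am Bp Bm zl where L: "LinOpt A B E P Ap Am Bp Bm zl"
      and split: "sum P Am * sum P Bm < sum P Ap * sum P Bp"
      and "x' = (Ap, Bm, E \<inter> (Ap \<times> Bm)) \<or> x' = (Am, Bp, E \<inter> (Am \<times> Bp))"
      unfolding OptProb_call_def by auto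
    then show "x' \<in> Wellfounded.acc {(x', x). OptProb_call P x' x}"
      using less.hyps split_subproblems[OF less.prems L split] by blast
  qed
qed

lemma OptProb_exists:
  assumes "valid_instance A B E P"
  shows "\<exists>q z. OptProb A B E P q z"
  using assms
proof (induction "card A + card B" arbitrary: A B E rule: less_induct)
  case less
  obtain Ap Am Bp Bm zl where L: "LinOpt A B E P Ap Am Bp Bm zl"
    using LinOpt_exists[OF less.prems] by blast
  show ?case
  proof (cases "sum P Am * sum P Bm < sum P Ap * sum P Bp")
    case True
    note sub = split_subproblems[OF less.prems L True]
    obtain q' z' q'' z'' where "OptProb Ap Bm (E \<inter> (Ap \<times> Bm)) P q' z'"
      and "OptProb Am Bp (E \<inter> (Am \<times> Bp)) P q'' z''"
      using less.hyps[OF sub(2,1)] less.hyps[OF sub(4,3)] by blast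
    then show ?thesis
      using OptProb.split[OF L True] by blast
  next
    case False
    then show ?thesis
      using OptProb.stop[OF L] by blast
  qed
qed

theorem theorem3:
  fixes A B :: "'a set" and E :: "('a \<times> 'a) set" and P :: "'a \<Rightarrow> real"
  assumes "finite A" and "finite B" and "A \<inter> B = {}"
    and "E \<subseteq> A \<times> B"
    and "\<forall>v\<in>A \<union> B. P v > 0"
  shows "OptProb_terminates P A B E \<and> (\<exists>q z. OptProb A B E P q z) \<and>
         (\<forall>q z. OptProb A B E P q z \<longrightarrow> is_unique_minimizer A B E P q)"
proof -
  have valid: "valid_instance A B E P"
    using assms unfolding valid_instance_def by blast
  have "is_unique_minimizer A B E P q" if "OptProb A B E P q z" for q z
    using OptProb_invariant_holds[OF that valid] is_unique_minimizer_iff[OF valid]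
    unfolding OptProb_invariant_def by blast
  then show ?thesis
    using OptProb_terminates_if_valid[OF valid] OptProb_exists[OF valid] by blast
qed

end
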